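(* Let $k\ge4$ and let $C_k=\{x_{j_1}x_{j_2}\cdots x_{j_{k-3}}x_j^2:\ 1\le j_1<j_2<\dots<j_{k-3}<k,\ j_1\le j<k\}\subset P_{k-1}$. Then $C_k$ is exactly the set of admissible monomials $z$ in $P_{k-1}$ with weight vector $\omega(z)=(k-3,1,0,0,\dots)$. Consequently $\dim QP_{k-1}((k-3,1,0,\dots))=(k-3)\binom k2$.
   Context: $P_{k-1}=\mathbb F_2[x_1,\dots,x_{k-1}]$, $\deg x_i=1$, a module over the mod-2 Steenrod algebra $\mathcal A$, with augmentation ideal $\mathcal A^+$. For $a=\sum_i\alpha_i(a)2^i$ ($\alpha_i(a)\in\{0,1\}$) and a monomial $x=x_1^{a_1}\cdots x_{m}^{a_{m}}$, $\nu_j(x)=a_j$, the weight vector is $\omega(x)=(\omega_1(x),\omega_2(x),\dots)$ with $\omega_i(x)=\sum_j\alpha_{i-1}(\nu_j(x))$, and $\sigma(x)=(\nu_1(x),\dots,\nu_m(x))$. Weight vectors and sigma vectors are ordered left-lexicographically. For monomials $x,y$ of the same degree, $x<y$ iff $\omega(x)<\omega(y)$, or $\omega(x)=\omega(y)$ and $\sigma(x)<\sigma(y)$. A monomial $x$ is inadmissible if there are monomials $y_1,\dots,y_m$ with $y_t<x$ for all $t$ and $x-\sum_t y_t\in\mathcal A^+P_{k-1}$; otherwise it is admissible. For a weight vector $\omega$ (eventually-zero sequence, $\deg\omega=\sum_i2^{i-1}\omega_i$), $P(\omega)$ is spanned by monomials $y$ with $\deg y=\deg\omega$ and $\omega(y)\le\omega$,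 $P^-(\omega)$ by those with $\omega(y)<\omega$, and $QP_{k-1}(\omega)=P_{k-1}(\omega)/\big((\mathcal A^+P_{k-1}\cap P_{k-1}(\omega))+P_{k-1}^-(\omega)\big)$. *)

theory Defs
  imports Complex_Main "HOL-Library.Z2" "HOL-Library.Function_Algebras"
begin

text \<open>Monomials x_1^a_1 ... x_m^a_m are exponent vectors (variable j has exponent x j);
  a monomial of P_m has nonzero exponents only at variables 1..m.
  Polynomials over F_2 (= bit) are coefficient functions mono => bit.\<close>

type_synonym mono = "nat \<Rightarrow> nat"
type_synonym poly = "mono \<Rightarrow> bit"

definition Pmonos :: "nat \<Rightarrow> mono set" where
  "Pmonos m = {x. \<forall>j. x j \<noteq> 0 \<longrightarrow> 1 \<le> j \<and> j \<le> m}"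

definition mdeg :: "nat \<Rightarrow> mono \<Rightarrow> nat" where
  "mdeg m x = (\<Sum>j\<in>{1..m}. x j)"

definition mpoly :: "mono \<Rightarrow> poly" where
  "mpoly x = (\<lambda>y. if y = x then 1 else 0)"

definition scl :: "bit \<Rightarrow> poly \<Rightarrow> poly" where
  "scl c f = (\<lambda>y. c * f y)"

text \<open>Steenrod square Sq^i on a monomial of P_m (Cartan formula and
  Sq^i(x_j^a) = binom(a,i) x_j^(a+i)).\<close>
definition Sq :: "nat \<Rightarrow> nat \<Rightarrow> mono \<Rightarrow> poly" where
  "Sq m i x = (\<lambda>y. if y \<in> Pmonos m \<and> (\<forall>j. x j \<le> y j) \<and> mdeg m y = mdeg m x + i
       then of_nat (\<Prod>j\<in>{1..m}. (x j choose (y j - x j))) else 0)"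

text \<open>A^+ P_m: since A is generated by the Sq^i, A^+ P_m is the sum of the images of
  Sq^i, i > 0, i.e. the span of Sq^i applied to monomials.\<close>
definition Aplus :: "nat \<Rightarrow> poly set" where
  "Aplus m = module.span scl {Sq m i x | i x. 0 < i \<and> x \<in> Pmonos m}"

definition alpha :: "nat \<Rightarrow> nat \<Rightarrow> nat" where
  "alpha t a = (a div 2 ^ t) mod 2"

text \<open>Weight vector, shifted to index 0: omega m x t = omega_(t+1)(x).\<close>
definition omega :: "nat \<Rightarrow> mono \<Rightarrow> nat \<Rightarrow> nat" where
  "omega m x t = (\<Sum>j\<in>{1..m}. alpha t (x j))"

definition lexless :: "(nat \<Rightarrow> nat) \<Rightarrow> (nat \<Rightarrow> nat) \<Rightarrow> bool" where
  "lexless v w \<longleftrightarrow> (\<exists>t. (\<forall>s<t. v s = w s) \<and> v t < w t)"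

definition mless :: "nat \<Rightarrow> mono \<Rightarrow> mono \<Rightarrow> bool" where
  "mless m x y \<longleftrightarrow> mdeg m x = mdeg m y \<and>
     (lexless (omega m x) (omega m y) \<or> (omega m x = omega m y \<and> lexless x y))"

definition inadmissible :: "nat \<Rightarrow> mono \<Rightarrow> bool" where
  "inadmissible m x \<longleftrightarrow> x \<in> Pmonos m \<and> (\<exists>Y. finite Y \<and> Y \<subseteq> Pmonos m \<and> (\<forall>y\<in>Y. mless m y x) \<and>
       mpoly x - (\<Sum>y\<in>Y. mpoly y) \<in> Aplus m)"

definition admissible :: "nat \<Rightarrow> mono \<Rightarrow> bool" where
  "admissible m x \<longleftrightarrow> x \<in> Pmonos m \<and> \<not> inadmissible m x"

definition wdeg :: "(nat \<Rightarrow> nat) \<Rightarrow> nat" where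
  "wdeg w = (\<Sum>t\<in>{t. w t \<noteq> 0}. 2 ^ t * w t)"

definition Pw :: "nat \<Rightarrow> (nat \<Rightarrow> nat) \<Rightarrow> poly set" where
  "Pw m w = module.span scl {mpoly y | y. y \<in> Pmonos m \<and> mdeg m y = wdeg w \<and>
      (lexless (omega m y) w \<or> omega m y = w)}"

definition Pw_minus :: "nat \<Rightarrow> (nat \<Rightarrow> nat) \<Rightarrow> poly set" where
  "Pw_minus m w = module.span scl {mpoly y | y. y \<in> Pmonos m \<and> mdeg m y = wdeg w \<and>
      lexless (omega m y) w}"

text \<open>dim QP_m(w) = dim P_m(w) - dim of the subspace ((A^+P_m \<inter> P_m(w)) + P_m^-(w)),
  which is contained in P_m(w) (all finite dimensional).\<close>
definition dimQP :: "nat \<Rightarrow> (nat \<Rightarrow> nat) \<Rightarrow> nat" where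
  "dimQP m w = vector_space.dim scl (Pw m w)
     - vector_space.dim scl (module.span scl ((Aplus m \<inter> Pw m w) \<union> Pw_minus m w))"

definition Cset :: "nat \<Rightarrow> mono set" where
  "Cset k = {x. \<exists>J j. J \<subseteq> {1..<k} \<and> card J = k - 3 \<and> Min J \<le> j \<and> j < k \<and>
      x = (\<lambda>i. (if i \<in> J then 1 else 0) + (if i = j then 2 else 0))}"

end

theory Submission
  imports Defs
begin

text \<open>A monomial of weight vector (c, 1, 0, ...) has the form x_J x_j^2 with |J| = c.  If j is
  below every element of J, the Cartan formula gives
  x_J x_j^2 = Sq^1(x_J x_j) + \<Sum>_{i \<in> J} x_{J \<union> {j} - {i}} x_i^2, and all monomials on the
  right are smaller, so x_J x_j^2 is inadmissible.  Otherwise (j_1 \<le> j) there is a small set W of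
  monomials of the same weight, all larger than x_J x_j^2 except itself, such that the coefficient
  sum over W vanishes on A^+ P_m; this functional shows admissibility.  The same functionals show
  that C_k is linearly independent modulo A^+ P_m + P_m^-(\<omega>), and the Cartan relation shows
  that C_k spans, so dim QP_{k-1}(\<omega>) = |C_k|.  Finally |C_k| = m \<cdot> (m choose c) - (m choose c+1)
  for m = k - 1, c = k - 3, because the pairs (J, j) with j below J correspond to the
  (c+1)-subsets of {1..m} via (J, j) \<mapsto> J \<union> {j}.\<close>

section \<open>Complements in vector spaces\<close>

lemma (in vector_space) independent_Un:
  assumes B: "independent B" and C: "independent C" "finite C"
    and disjoint: "span B \<inter> span C \<subseteq> {0}"
  shows "independent (B \<union> C)"
proof -
  have "independent (B \<union> D)" if "finite D" "D \<subseteq> C" for D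
    using that
  proof (induction D rule: finite_induct)
    case empty
    then show ?case using B by simp
  next
    case (insert c D)
    have "c \<notin> span (B \<union> D)"
    proof
      assume "c \<in> span (B \<union> D)"
      then obtain s t where st: "c = s + t" "s \<in> span B" "t \<in> span D"
        unfolding span_Un by blast
      have "span D \<subseteq> span C" using insert.prems by (intro span_mono) auto
      then have "t \<in> span C" using st(3) by blast
      moreover have "c \<in> span C" using insert.prems by (intro span_base) auto
      ultimately have "c - t \<in> span C" by (intro span_diff)
      moreover have "c - t = s" using st(1) by simp
      ultimately have "s \<in> span C" by simp
      then have "s = 0" using disjoint st(2) by auto
      moreover have "span D \<subseteq> span (C - {c})" using insert by (intro span_mono) auto
      ultimately have "c \<in> span (C - {c})" using st by auto
      then show False using C(1) insert.prems unfolding dependent_def by auto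
    qed
    then show ?case using insert independent_insertI[of c "B \<union> D"] by auto
  qed
  then show ?thesis using C(2) by blast
qed

lemma (in vector_space) dim_span_Un_eq_add_card:
  assumes "finite G" "S \<subseteq> span G" "independent C" "finite C" "span S \<inter> span C \<subseteq> {0}"
  shows "dim (span (S \<union> C)) = dim (span S) + card C"
proof -
  obtain B where B: "B \<subseteq> span S" "independent B" "span S \<subseteq> span B" "card B = dim (span S)"
    using basis_exists by blast
  have span_B: "span B = span S" using B(1,3) by (intro span_subspace) auto
  have "B \<subseteq> span G" using B(1) assms(2) span_minimal[OF assms(2)] by auto
  then have "finite B" using independent_span_bound[OF assms(1) B(2)] by simp
  moreover have "B \<inter> C = {}"
  proof -
    have "B \<inter> C \<subseteq> span S \<inter> span C" using B(1) span_base by auto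
    then have "B \<inter> C \<subseteq> {0}" using assms(5) by blast
    then show ?thesis using dependent_zero assms(3) by blast
  qed
  moreover have "independent (B \<union> C)"
    using independent_Un[OF B(2) assms(3,4)] assms(5) span_B by simp
  moreover have "span (S \<union> C) = span (B \<union> C)" by (simp add: span_Un span_B)
  ultimately show ?thesis
    using B(4) assms(4) by (simp add: dim_eq_card_independent card_Un_disjoint)
qed

section \<open>Polynomials over F_2\<close>

text \<open>Keep \<open>+\<close> and \<open>*\<close> on bit as ring operations instead of letting simp turn them into XOR/AND.\<close>
declare add_bit_eq_xor[simp del] mult_bit_eq_and[simp del]

interpretation V: vector_space scl
  by unfold_locales (auto simp: scl_def fun_eq_iff algebra_simps)

lemma of_nat_bit: "(of_nat n :: bit) = (if even n then 0 else 1)"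
  by (metis even_of_nat_iff odd_one bit_not_zero_iff even_zero)

lemma bit_add_self: "(b::bit) + b = 0"
  by (cases b) simp_all

lemma poly_diff_eq_add: "(f::poly) - g = f + g"
  by (auto simp: fun_eq_iff)

lemma mpoly_apply: "mpoly x y = (if y = x then 1 else 0)"
  by (simp add: mpoly_def)

lemma mpoly_inject [simp]: "mpoly x = mpoly y \<longleftrightarrow> x = y"
  by (metis mpoly_apply zero_neq_one)

lemma sum_mpoly_apply: "finite Y \<Longrightarrow> (\<Sum>y\<in>Y. mpoly y) x = (if x \<in> Y then 1 else 0)"
  by (induction Y rule: finite_induct) (auto simp: mpoly_apply)

lemma sum_eq_0_on_span:
  assumes "finite W" and "\<And>g. g \<in> G \<Longrightarrow> (\<Sum>y\<in>W. g y) = (0::bit)" and "f \<in> V.span G"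
  shows "(\<Sum>y\<in>W. f y) = 0"
proof -
  have "V.subspace {f. (\<Sum>y\<in>W. f y) = 0}"
    unfolding V.subspace_def scl_def by (auto simp: sum.distrib sum_distrib_left[symmetric])
  then have "V.span G \<subseteq> {f. (\<Sum>y\<in>W. f y) = 0}"
    using assms(2) by (intro V.span_minimal) auto
  then show ?thesis using assms(3) by auto
qed

lemma span_mpoly_apply_notin:
  assumes "f \<in> V.span (mpoly ` A)" and "x \<notin> A"
  shows "f x = 0"
proof -
  have "(\<Sum>y\<in>{x}. f y) = 0"
    by (rule sum_eq_0_on_span[OF _ _ assms(1)]) (use assms(2) in \<open>auto simp: mpoly_apply\<close>)
  then show ?thesis by simp
qed

lemma independent_mpoly: "V.independent (mpoly ` A)"
proof
  assume "V.dependent (mpoly ` A)"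
  then obtain x where "x \<in> A" and "mpoly x \<in> V.span (mpoly ` A - {mpoly x})"
    unfolding V.dependent_def by blast
  moreover have "mpoly ` A - {mpoly x} = mpoly ` (A - {x})" by auto
  ultimately have "mpoly x x = 0" using span_mpoly_apply_notin[of "mpoly x" "A - {x}" x] by simp
  then show False by (simp add: mpoly_apply)
qed

lemma Pmonos_outside: "x \<in> Pmonos m \<Longrightarrow> l \<notin> {1..m} \<Longrightarrow> x l = 0"
  unfolding Pmonos_def by auto

lemma Pmonos_eqI:
  "x = y" if "x \<in> Pmonos m" "y \<in> Pmonos m" "\<And>l. l \<in> {1..m} \<Longrightarrow> x l = y l"
proof
  fix l show "x l = y l" using that by (cases "l \<in> {1..m}") (auto simp: Pmonos_outside)
qed

lemma Pmonos_le:
  assumes "y \<in> Pmonos m" "\<And>l. z l \<le> y l"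
  shows "z \<in> Pmonos m"
  unfolding Pmonos_def
proof (intro CollectI allI impI)
  fix j assume "z j \<noteq> 0"
  then have "y j \<noteq> 0" using assms(2)[of j] by linarith
  then show "1 \<le> j \<and> j \<le> m" using assms(1) unfolding Pmonos_def by blast
qed

lemma Pmonos_fun_upd: "x \<in> Pmonos m \<Longrightarrow> p \<in> {1..m} \<Longrightarrow> x(p := a) \<in> Pmonos m"
  unfolding Pmonos_def by auto

lemma mdeg_cong: "(\<And>l. l \<in> {1..m} \<Longrightarrow> x l = y l) \<Longrightarrow> mdeg m x = mdeg m y"
  unfolding mdeg_def by (rule sum.cong) auto

lemma mdeg_fun_upd:
  assumes "p \<in> {1..m}"
  shows "mdeg m (x(p := a)) + x p = mdeg m x + a"
proof -
  have "(\<Sum>l\<in>{1..m} - {p}. (x(p := a)) l) = (\<Sum>l\<in>{1..m} - {p}. x l)"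
    by (rule sum.cong) auto
  then show ?thesis
    unfolding mdeg_def using assms by (simp add: sum.remove[of _ p])
qed

lemma finite_Pmonos_mdeg: "finite {y \<in> Pmonos m. mdeg m y = d}"
proof (rule finite_subset)
  show "{y \<in> Pmonos m. mdeg m y = d} \<subseteq>
      {f. \<forall>l. (l \<in> {1..m} \<longrightarrow> f l \<in> {0..d}) \<and> (l \<notin> {1..m} \<longrightarrow> f l = 0)}"
  proof (intro subsetI CollectI allI conjI impI)
    fix y l assume y: "y \<in> {y \<in> Pmonos m. mdeg m y = d}"
    show "l \<notin> {1..m} \<Longrightarrow> y l = 0" using y Pmonos_outside by blast
    assume "l \<in> {1..m}"
    then have "y l \<le> mdeg m y" unfolding mdeg_def by (intro member_le_sum) auto
    then show "y l \<in> {0..d}" using y by simp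
  qed
  show "finite {f. \<forall>l. (l \<in> {1..m} \<longrightarrow> f l \<in> {0..d}) \<and> (l \<notin> {1..m} \<longrightarrow> f l = (0::nat))}"
    by (rule finite_set_of_finite_funs) auto
qed

lemma lexless_irrefl: "\<not> lexless v v"
  by (auto simp: lexless_def)

lemma lexless_asym:
  assumes "lexless v w"
  shows "\<not> lexless w v"
proof
  assume "lexless w v"
  then obtain t where t: "\<forall>s<t. w s = v s" "w t < v t" by (auto simp: lexless_def)
  obtain t' where t': "\<forall>s<t'. v s = w s" "v t' < w t'" using assms by (auto simp: lexless_def)
  show False
  proof (cases t t' rule: linorder_cases)
    case less
    then have "v t = w t" using t'(1) by blast
    then show ?thesis using t(2) by simp
  next
    case equal
    then show ?thesis using t(2) t'(2) by simp
  next
    case greater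
    then have "w t' = v t'" using t(1) by blast
    then show ?thesis using t'(2) by simp
  qed
qed

lemma mless_irrefl: "\<not> mless m x x"
  by (simp add: mless_def lexless_irrefl)

lemma not_mless_if_lexless: "omega m y = omega m x \<Longrightarrow> lexless x y \<Longrightarrow> \<not> mless m y x"
  by (auto simp: mless_def dest: lexless_asym)

section \<open>Steenrod squares on monomials with small exponents\<close>

lemma odd_choose_le: "odd (a choose b) \<Longrightarrow> b \<le> a"
  by (metis binomial_eq_0 even_zero not_le)

lemma odd_choose_diff_cases:
  assumes "a \<le> b" "b \<le> (3::nat)" "odd (a choose (b - a))"
  shows "a = b \<or> (a = 1 \<and> b = 2)"
proof -
  have "b - a \<le> a" using odd_choose_le[OF assms(3)] .
  moreover have "\<not> (a = 2 \<and> b = 3)" using assms(3) by auto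
  ultimately show ?thesis using assms(1,2) by linarith
qed

lemma Sq_neq_0D:
  assumes "Sq m i z y \<noteq> 0"
  shows "y \<in> Pmonos m" and "\<And>l. z l \<le> y l" and "mdeg m y = mdeg m z + i"
    and "\<And>l. l \<in> {1..m} \<Longrightarrow> odd (z l choose (y l - z l))"
proof -
  have "y \<in> Pmonos m \<and> (\<forall>l. z l \<le> y l) \<and> mdeg m y = mdeg m z + i"
    and odd: "odd (\<Prod>l\<in>{1..m}. z l choose (y l - z l))"
    using assms unfolding Sq_def by (auto split: if_splits simp: of_nat_bit)
  then show "y \<in> Pmonos m" "\<And>l. z l \<le> y l" "mdeg m y = mdeg m z + i" by auto
  show "\<And>l. l \<in> {1..m} \<Longrightarrow> odd (z l choose (y l - z l))"
    using odd by (simp add: even_prod_iff)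
qed

lemma Sq_neq_0_exponent_cases:
  assumes "Sq m i z y \<noteq> 0" "l \<in> {1..m}" "y l \<le> 3"
  shows "z l = y l \<or> (z l = 1 \<and> y l = 2)"
  using odd_choose_diff_cases Sq_neq_0D[OF assms(1)] assms(2,3) by blast

lemma Sq_in_Aplus: "0 < i \<Longrightarrow> z \<in> Pmonos m \<Longrightarrow> Sq m i z \<in> Aplus m"
  unfolding Aplus_def by (rule V.span_base) auto

lemma Aplus_sum_eq_0I:
  assumes "finite W" and "\<And>i z. 0 < i \<Longrightarrow> z \<in> Pmonos m \<Longrightarrow> (\<Sum>y\<in>W. Sq m i z y) = 0"
    and "f \<in> Aplus m"
  shows "(\<Sum>y\<in>W. f y) = 0"
  by (rule sum_eq_0_on_span[OF assms(1) _ assms(3)[unfolded Aplus_def]]) (use assms(2) in blast)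

lemma Sq_apply_no_square_exponent:
  assumes "\<And>l. l \<in> {1..m} \<Longrightarrow> y l \<noteq> 2 \<and> y l \<le> 3" and "0 < i"
  shows "Sq m i z y = 0"
proof (rule ccontr)
  assume "Sq m i z y \<noteq> 0"
  note S = Sq_neq_0D[OF this]
  have "mdeg m z = mdeg m y"
    by (rule mdeg_cong) (use Sq_neq_0_exponent_cases[OF \<open>Sq m i z y \<noteq> 0\<close>] assms(1) in fastforce)
  then show False using S(3) assms(2) by simp
qed

lemma Sq_apply_square:
  assumes u: "u \<in> Pmonos m" "\<And>l. u l \<le> 1" and p: "p \<in> {1..m}" "u p = 1" and "0 < i"
  shows "Sq m i z (u(p := 2)) = (if z = u \<and> i = 1 then 1 else 0)"
proof (cases "z = u \<and> i = 1")
  case True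
  have "(\<Prod>l\<in>{1..m}. u l choose ((u(p := 2)) l - u l)) = 1"
    using p by (intro prod.neutral) auto
  moreover have "mdeg m (u(p := 2)) = mdeg m u + 1" using mdeg_fun_upd[OF p(1), of u 2] p(2) by simp
  moreover have "u(p := 2) \<in> Pmonos m" by (rule Pmonos_fun_upd[OF u(1) p(1)])
  moreover have "u l \<le> (u(p := 2)) l" for l using p(2) by simp
  ultimately show ?thesis
    using True unfolding Sq_def by simp
next
  case False
  have "Sq m i z (u(p := 2)) = 0"
  proof (rule ccontr)
    assume "Sq m i z (u(p := 2)) \<noteq> 0"
    note S = Sq_neq_0D[OF this]
    have z: "z l = (u(p := 2)) l \<or> (l = p \<and> z l = 1)" if "l \<in> {1..m}" for l
      using Sq_neq_0_exponent_cases[OF \<open>Sq m i z (u(p := 2)) \<noteq> 0\<close> that] u(2)[of l]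
      by (cases "l = p") auto
    have "z p = 1"
    proof (rule ccontr)
      assume "z p \<noteq> 1"
      have "mdeg m z = mdeg m (u(p := 2))"
      proof (rule mdeg_cong)
        fix l assume "l \<in> {1..m}"
        then show "z l = (u(p := 2)) l" using z[of l] \<open>z p \<noteq> 1\<close> by auto
      qed
      then show False using S(3) \<open>0 < i\<close> by simp
    qed
    have "z = u"
    proof (rule Pmonos_eqI[OF Pmonos_le[OF S(1,2)] u(1)])
      fix l assume "l \<in> {1..m}"
      then show "z l = u l" using z[of l] \<open>z p = 1\<close> p(2) by (cases "l = p") auto
    qed
    moreover have "i = 1" using S(3) mdeg_fun_upd[OF p(1), of u 2] p(2) \<open>z = u\<close> by simp
    ultimately show False using False by simp
  qed
  then show ?thesis using False by simp
qed

lemma Sq1_neq_0_squarefree: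
  assumes u: "u \<in> Pmonos m" "\<And>l. u l \<le> 1" and "Sq m 1 u y \<noteq> 0"
  obtains p where "p \<in> {1..m}" "u p = 1" "y = u(p := 2)"
proof -
  note S = Sq_neq_0D[OF \<open>Sq m 1 u y \<noteq> 0\<close>]
  have "\<exists>p\<in>{1..m}. u p < y p"
  proof (rule ccontr)
    assume none: "\<not> (\<exists>p\<in>{1..m}. u p < y p)"
    have "mdeg m u = mdeg m y"
    proof (rule mdeg_cong)
      fix l assume "l \<in> {1..m}"
      then show "u l = y l" using none S(2)[of l] by (auto simp: le_less)
    qed
    then show False using S(3) by simp
  qed
  then obtain p where p: "p \<in> {1..m}" "u p < y p" by blast
  moreover have "y p - u p \<le> u p" using odd_choose_le[OF S(4)[OF p(1)]] .
  ultimately have "u p = 1" "y p = 2" using u(2)[of p] by linarith+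
  have le: "(u(p := 2)) l \<le> y l" for l
    using S(2) \<open>y p = 2\<close> by simp
  have deg: "mdeg m (u(p := 2)) = mdeg m y"
    using S(3) mdeg_fun_upd[OF p(1), of u 2] \<open>u p = 1\<close> by simp
  have "u(p := 2) = y"
  proof (rule Pmonos_eqI[OF Pmonos_fun_upd[OF u(1) p(1)] S(1)])
    fix l assume "l \<in> {1..m}"
    then show "(u(p := 2)) l = y l"
      using sum_mono_inv[of "u(p := 2)" "{1..m}" y] le deg unfolding mdeg_def by blast
  qed
  with p(1) \<open>u p = 1\<close> show ?thesis by (intro that) auto
qed

lemma Sq1_apply_squarefree:
  assumes u: "u \<in> Pmonos m" "\<And>l. u l \<le> 1"
  shows "Sq m 1 u y = (if \<exists>p\<in>{1..m}. u p = 1 \<and> y = u(p := 2) then 1 else 0)"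
proof (cases "\<exists>p\<in>{1..m}. u p = 1 \<and> y = u(p := 2)")
  case True
  then obtain p where "p \<in> {1..m}" "u p = 1" "y = u(p := 2)" by blast
  then show ?thesis using Sq_apply_square[OF u, of p 1 u] True by simp
next
  case False
  then have "Sq m 1 u y = 0" using Sq1_neq_0_squarefree[OF u] by blast
  then show ?thesis using False by simp
qed

lemma Sq_add_Sq_square_pair:
  assumes "u \<in> Pmonos m" "\<And>l. u l \<le> 1" "p \<in> {1..m}" "u p = 1" "q \<in> {1..m}" "u q = 1" "0 < i"
  shows "Sq m i z (u(p := 2)) + Sq m i z (u(q := 2)) = 0"
  using Sq_apply_square[OF assms(1-4,7)] Sq_apply_square[OF assms(1,2,5,6,7)] by (simp add: bit_add_self)

section \<open>Monomials of weight vector (c, 1, 0, ...)\<close>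

definition weight :: "nat \<Rightarrow> nat \<Rightarrow> nat" where
  "weight c = (\<lambda>t. if t = 0 then c else if t = 1 then 1 else 0)"

definition sqfree :: "nat set \<Rightarrow> mono" where
  "sqfree S = (\<lambda>l. if l \<in> S then 1 else 0)"

definition sqmono :: "nat set \<Rightarrow> nat \<Rightarrow> mono" where
  "sqmono J j = (\<lambda>l. (if l \<in> J then 1 else 0) + (if l = j then 2 else 0))"

lemma sqfree_Pmonos: "S \<subseteq> {1..m} \<Longrightarrow> sqfree S \<in> Pmonos m"
  by (auto simp: sqfree_def Pmonos_def)

lemma sqfree_le_1: "sqfree S l \<le> 1"
  by (simp add: sqfree_def)

lemma sqfree_fun_upd: "p \<in> S \<Longrightarrow> (sqfree S)(p := 2) = sqmono (S - {p}) p"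
  by (auto simp: sqfree_def sqmono_def fun_eq_iff)

lemma sqmono_Pmonos: "J \<subseteq> {1..m} \<Longrightarrow> j \<in> {1..m} \<Longrightarrow> sqmono J j \<in> Pmonos m"
  by (auto simp: sqmono_def Pmonos_def)

lemma sqmono_inject: "sqmono J j = sqmono J' j' \<longleftrightarrow> J = J' \<and> j = j'"
proof
  assume eq: "sqmono J j = sqmono J' j'"
  have "J = {l. odd (sqmono J j l)}" "J' = {l. odd (sqmono J' j' l)}"
    by (auto simp: sqmono_def)
  then have "J = J'" using eq by simp
  moreover have "j = j' \<or> (2 \<le> sqmono J j j \<and> \<not> 2 \<le> sqmono J' j' j)"
    by (auto simp: sqmono_def)
  ultimately show "J = J' \<and> j = j'" using eq by auto
qed simp

lemma alpha_lt_4: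
  assumes "b0 \<le> 1" "b1 \<le> 1"
  shows "alpha t (b0 + 2 * b1) = (if t = 0 then b0 else if t = 1 then b1 else 0)"
proof -
  consider "t = 0" | "t = 1" | "2 \<le> t" by linarith
  then show ?thesis
  proof cases
    case 3
    then have "(4::nat) \<le> 2 ^ t" using power_increasing[of 2 t "2::nat"] by simp
    then have "(b0 + 2 * b1) div 2 ^ t = 0" using assms by simp
    then show ?thesis using 3 by (simp add: alpha_def)
  qed (use assms in \<open>auto simp: alpha_def\<close>)
qed

lemma alpha_high_neq_0:
  assumes "4 \<le> a"
  shows "\<exists>t\<ge>2. alpha t a \<noteq> 0"
proof -
  obtain t where t: "2 ^ t \<le> a" "a < 2 ^ (t + 1)"
    using ex_power_ivl1[of 2 a] assms by auto
  have "2 \<le> t"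
  proof (rule ccontr)
    assume "\<not> 2 \<le> t"
    then have "(2::nat) ^ (t + 1) \<le> 2 ^ 2" by (intro power_increasing) auto
    then show False using t(2) assms by simp
  qed
  moreover have "a div 2 ^ t = 1"
    using t by (intro div_nat_eqI) auto
  ultimately show ?thesis by (auto simp: alpha_def)
qed

lemma sum_01_eq_card:
  assumes "finite A" "\<And>l. l \<in> A \<Longrightarrow> f l \<le> (1::nat)"
  shows "(\<Sum>l\<in>A. f l) = card {l\<in>A. f l = 1}"
proof -
  have "(\<Sum>l\<in>A. f l) = (\<Sum>l\<in>A. if f l = 1 then 1 else 0)"
    using assms(2) by (intro sum.cong) (auto simp: le_Suc_eq)
  then show ?thesis using assms(1) by (simp add: sum.If_cases Int_def)
qed

lemma omega_sqmono:
  assumes "J \<subseteq> {1..m}" "j \<in> {1..m}"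
  shows "omega m (sqmono J j) = weight (card J)"
proof
  fix t
  have "alpha t (sqmono J j l) =
      (if t = 0 then (if l \<in> J then 1 else 0) else if t = 1 then (if l = j then 1 else 0) else 0)" for l
    using alpha_lt_4[of "if l \<in> J then 1 else 0" "if l = j then 1 else 0" t]
    unfolding sqmono_def by (simp add: if_distrib cong: if_cong)
  moreover have "{1..m} \<inter> J = J" using assms(1) by auto
  ultimately show "omega m (sqmono J j) t = weight (card J) t"
    using assms(2) unfolding omega_def weight_def by (simp add: sum.If_cases)
qed

lemma mdeg_sqmono:
  assumes "J \<subseteq> {1..m}" "j \<in> {1..m}"
  shows "mdeg m (sqmono J j) = card J + 2"
proof -
  have "{1..m} \<inter> J = J" using assms(1) by auto
  then show ?thesis
    using assms(2) unfolding mdeg_def sqmono_def by (simp add: sum.distrib sum.If_cases)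
qed

lemma wdeg_weight: "wdeg (weight c) = c + 2"
proof (cases "c = 0")
  case True
  then have "{t. weight c t \<noteq> 0} = {1}" by (auto simp: weight_def)
  then show ?thesis using True by (simp add: wdeg_def weight_def)
next
  case False
  then have "{t. weight c t \<noteq> 0} = {0, 1}" by (auto simp: weight_def)
  then show ?thesis by (simp add: wdeg_def weight_def)
qed

lemma omega_eq_weightE:
  assumes z: "z \<in> Pmonos m" and omega: "omega m z = weight c"
  obtains J j where "J \<subseteq> {1..m}" "j \<in> {1..m}" "card J = c" "z = sqmono J j"
proof -
  have small: "z l < 4" if l: "l \<in> {1..m}" for l
  proof (rule ccontr)
    assume "\<not> z l < 4"
    then obtain t where t: "2 \<le> t" "alpha t (z l) \<noteq> 0" using alpha_high_neq_0 by (meson not_less)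
    have "omega m z t = 0" using omega t(1) by (simp add: weight_def)
    then show False using t(2) l unfolding omega_def by simp
  qed
  define J where "J = {l\<in>{1..m}. alpha 0 (z l) = 1}"
  define K where "K = {l\<in>{1..m}. alpha 1 (z l) = 1}"
  have "omega m z 0 = card J" "omega m z 1 = card K"
    unfolding omega_def J_def K_def by (rule sum_01_eq_card; simp add: alpha_def)+
  then have card: "card J = c" "card K = 1" using omega by (simp_all add: weight_def)
  then obtain j where K: "K = {j}" using card_1_singletonE by blast
  then have j: "j \<in> {1..m}" unfolding K_def by auto
  have J: "J \<subseteq> {1..m}" unfolding J_def by auto
  have "z = sqmono J j"
  proof (rule Pmonos_eqI[OF z sqmono_Pmonos[OF J j]])
    fix l assume l: "l \<in> {1..m}"
    have "l \<in> J \<longleftrightarrow> odd (z l)" "l = j \<longleftrightarrow> odd (z l div 2)"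
      using l K unfolding J_def K_def alpha_def by (auto simp: odd_iff_mod_2_eq_one)
    moreover have "z l \<in> {0, 1, 2, 3}" using small[OF l] by auto
    ultimately show "z l = sqmono J j l" by (auto simp: sqmono_def)
  qed
  with J j card(1) show ?thesis by (rule that)
qed

lemma Sq1_sqfree:
  assumes "S \<subseteq> {1..m}"
  shows "Sq m 1 (sqfree S) = (\<Sum>p\<in>S. mpoly (sqmono (S - {p}) p))"
proof
  fix y
  let ?sq = "\<lambda>p. sqmono (S - {p}) p"
  have "inj_on ?sq S" by (auto intro: inj_onI simp: sqmono_inject)
  then have "(\<Sum>p\<in>S. mpoly (?sq p)) = (\<Sum>x\<in>?sq ` S. mpoly x)" by (simp add: sum.reindex)
  moreover have "finite S" using assms finite_subset by blast
  ultimately have "(\<Sum>p\<in>S. mpoly (?sq p)) y = (if y \<in> ?sq ` S then 1 else 0)"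
    by (simp add: sum_mpoly_apply)
  moreover have "(\<exists>p\<in>{1..m}. sqfree S p = 1 \<and> y = (sqfree S)(p := 2)) \<longleftrightarrow>
      (\<exists>p\<in>S. y = (sqfree S)(p := 2))"
    using assms by (auto simp: sqfree_def)
  moreover have "(\<exists>p\<in>S. y = (sqfree S)(p := 2)) \<longleftrightarrow> y \<in> ?sq ` S"
    unfolding image_iff by (intro bex_cong refl) (simp add: sqfree_fun_upd)
  ultimately show "Sq m 1 (sqfree S) y = (\<Sum>p\<in>S. mpoly (?sq p)) y"
    unfolding Sq1_apply_squarefree[OF sqfree_Pmonos[OF assms] sqfree_le_1] by simp
qed

lemma mpoly_sqmono_eq:
  assumes "J \<subseteq> {1..m}" "j \<in> {1..m}" "j \<notin> J"
  shows "mpoly (sqmono J j) = Sq m 1 (sqfree (insert j J)) + (\<Sum>i\<in>J. mpoly (sqmono (insert j J - {i}) i))"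
proof -
  have "Sq m 1 (sqfree (insert j J)) = (\<Sum>p\<in>insert j J. mpoly (sqmono (insert j J - {p}) p))"
    using assms by (intro Sq1_sqfree) auto
  also have "\<dots> = mpoly (sqmono J j) + (\<Sum>i\<in>J. mpoly (sqmono (insert j J - {i}) i))"
    using assms finite_subset[OF assms(1)] by (simp add: Diff_insert_absorb)
  finally have "Sq m 1 (sqfree (insert j J)) - (\<Sum>i\<in>J. mpoly (sqmono (insert j J - {i}) i)) = mpoly (sqmono J j)"
    by simp
  then show ?thesis by (simp only: poly_diff_eq_add)
qed

section \<open>Admissibility\<close>

text \<open>A linear functional (coefficient sum over W) that kills A^+ P_m but not x = x_J x_j^2.
  If j \<in> J, no exponent of x is 2, so no Sq^i with i > 0 hits x and W = {x}.  Otherwise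
  x = u(j := 2) for u = x_J x_j, and W = {x, u(a := 2)} with a = Min J: both monomials are hit by
  exactly the same squares (only Sq^1 u), so the sum cancels; and u(a := 2) has the same weight and
  exceeds x in the \<sigma>-order, which is what makes x admissible.\<close>
lemma sqmono_test_set:
  assumes J: "J \<subseteq> {1..m}" and j: "j \<le> m" and i: "i \<in> J" "i \<le> j"
  obtains W where "finite W" "sqmono J j \<in> W"
    "\<And>f. f \<in> Aplus m \<Longrightarrow> (\<Sum>y\<in>W. f y) = 0"
    "\<And>y. y \<in> W - {sqmono J j} \<Longrightarrow> omega m y = omega m (sqmono J j) \<and> lexless (sqmono J j) y \<and>
        (\<exists>J' j'. y = sqmono J' j' \<and> (\<forall>i\<in>J'. j' < i))"
proof (cases "j \<in> J")
  case True
  have "(\<Sum>y\<in>{sqmono J j}. Sq m i' z y) = 0" if "0 < i'" for i' z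
    using Sq_apply_no_square_exponent[OF _ that] True by (auto simp: sqmono_def)
  then have "(\<Sum>y\<in>{sqmono J j}. f y) = 0" if "f \<in> Aplus m" for f
    by (intro Aplus_sum_eq_0I[OF _ _ that]) auto
  then show ?thesis by (intro that[of "{sqmono J j}"]) auto
next
  case False
  define a where "a = Min J"
  define u where "u = sqfree (insert j J)"
  define J' where "J' = insert j J - {a}"
  have "finite J" using J finite_subset by blast
  then have a: "a \<in> J" "\<And>b. b \<in> J \<Longrightarrow> a \<le> b"
    using i(1) unfolding a_def by (auto intro: Min_in)
  then have "a < j" using i False by (metis le_neq_implies_less order_trans)
  have ja: "j \<in> {1..m}" "a \<in> {1..m}" using J j a(1) i by auto
  have x: "sqmono J j = u(j := 2)" and x': "sqmono J' a = u(a := 2)"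
    using sqfree_fun_upd[of j "insert j J"] sqfree_fun_upd[of a "insert j J"] False a(1)
    unfolding u_def J'_def by auto
  have u: "u \<in> Pmonos m" "\<And>l. u l \<le> 1" "u j = 1" "u a = 1"
    using J ja a(1) unfolding u_def by (auto intro!: sqfree_Pmonos sqfree_le_1) (simp_all add: sqfree_def)
  have neq: "sqmono J' a \<noteq> sqmono J j" using \<open>a < j\<close> by (simp add: sqmono_inject)
  have "(\<Sum>y\<in>{sqmono J j, sqmono J' a}. Sq m i' z y) = 0" if "0 < i'" for i' z
    using neq Sq_add_Sq_square_pair[OF u(1,2) ja(1) u(3) ja(2) u(4) that] unfolding x x' by simp
  then have kill: "(\<Sum>y\<in>{sqmono J j, sqmono J' a}. f y) = 0" if "f \<in> Aplus m" for f
    by (intro Aplus_sum_eq_0I[OF _ _ that]) auto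
  have "card J' = card J" using \<open>finite J\<close> a(1) False unfolding J'_def by simp
  moreover have "J' \<subseteq> {1..m}" using J ja unfolding J'_def by auto
  ultimately have "omega m (sqmono J' a) = omega m (sqmono J j)"
    using J ja by (simp add: omega_sqmono)
  moreover have "lexless (sqmono J j) (sqmono J' a)"
    unfolding lexless_def x x'
    using \<open>a < j\<close> u(4) by (intro exI[of _ a]) auto
  moreover have "\<forall>b\<in>J'. a < b"
    using a \<open>a < j\<close> unfolding J'_def by (auto simp: le_less)
  ultimately show ?thesis
    using kill neq by (intro that[of "{sqmono J j, sqmono J' a}"]) auto
qed

lemma sqmono_admissible:
  assumes "J \<subseteq> {1..m}" "j \<le> m" "i \<in> J" "i \<le> j"
  shows "admissible m (sqmono J j)"
proof -
  let ?x = "sqmono J j"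
  obtain W where W: "finite W" "?x \<in> W" "\<And>f. f \<in> Aplus m \<Longrightarrow> (\<Sum>y\<in>W. f y) = 0"
      "\<And>y. y \<in> W - {?x} \<Longrightarrow> omega m y = omega m ?x \<and> lexless ?x y"
    by (rule sqmono_test_set[OF assms]) blast
  have "?x \<in> Pmonos m" using assms by (intro sqmono_Pmonos) auto
  moreover have False
    if Y: "finite Y" "\<forall>y\<in>Y. mless m y ?x" "mpoly ?x - (\<Sum>y\<in>Y. mpoly y) \<in> Aplus m" for Y
  proof -
    define f where "f = mpoly ?x - (\<Sum>y\<in>Y. mpoly y)"
    have f: "f w = (if w = ?x then 1 else 0) - (if w \<in> Y then 1 else 0)" for w
      using Y(1) unfolding f_def by (simp add: sum_mpoly_apply mpoly_apply)
    have "?x \<notin> Y" using Y(2) mless_irrefl by blast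
    then have "f ?x = 1" by (simp add: f)
    moreover have "w \<notin> Y" if "w \<in> W - {?x}" for w
      using W(4)[OF that] Y(2) not_mless_if_lexless by blast
    then have "(\<Sum>w\<in>W - {?x}. f w) = 0" by (simp add: f)
    moreover have "(\<Sum>w\<in>W. f w) = f ?x + (\<Sum>w\<in>W - {?x}. f w)"
      using W(1,2) by (rule sum.remove)
    moreover have "(\<Sum>w\<in>W. f w) = 0" unfolding f_def by (rule W(3)[OF Y(3)])
    ultimately show False by simp
  qed
  ultimately show ?thesis unfolding admissible_def inadmissible_def by blast
qed

lemma sqmono_inadmissible:
  assumes J: "J \<subseteq> {1..m}" and j: "j \<in> {1..m}" and below: "\<forall>i\<in>J. j < i"
  shows "inadmissible m (sqmono J j)"
proof -
  let ?x = "sqmono J j"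
  let ?y = "\<lambda>i. sqmono (insert j J - {i}) i"
  have "finite J" using J finite_subset by blast
  have "j \<notin> J" using below by blast
  have "inj_on ?y J" by (auto intro: inj_onI simp: sqmono_inject)
  then have "mpoly ?x - (\<Sum>y\<in>?y ` J. mpoly y) = Sq m 1 (sqfree (insert j J))"
    by (simp add: sum.reindex mpoly_sqmono_eq[OF J j \<open>j \<notin> J\<close>])
  moreover have "Sq m 1 (sqfree (insert j J)) \<in> Aplus m"
    using J j by (intro Sq_in_Aplus sqfree_Pmonos) auto
  moreover have "mless m (?y i) ?x" if "i \<in> J" for i
  proof -
    have JJ: "insert j J - {i} \<subseteq> {1..m}" "i \<in> {1..m}" using J j that by auto
    have "card (insert j J - {i}) = card J" using \<open>finite J\<close> \<open>j \<notin> J\<close> that by simp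
    moreover have "lexless (?y i) ?x"
      unfolding lexless_def using below that by (intro exI[of _ j]) (auto simp: sqmono_def)
    ultimately show ?thesis
      unfolding mless_def using J j JJ by (simp add: mdeg_sqmono omega_sqmono)
  qed
  ultimately show ?thesis
    unfolding inadmissible_def using J j \<open>finite J\<close>
    by (intro conjI sqmono_Pmonos exI[of _ "?y ` J"]) (auto intro!: sqmono_Pmonos)
qed

text \<open>C_k is \<open>Cmonos (k - 1) (k - 3)\<close>; the condition \<open>\<exists>i\<in>J. i \<le> j\<close> is j_1 \<le> j.\<close>
definition Cmonos :: "nat \<Rightarrow> nat \<Rightarrow> mono set" where
  "Cmonos m c = {sqmono J j | J j. J \<subseteq> {1..m} \<and> card J = c \<and> j \<le> m \<and> (\<exists>i\<in>J. i \<le> j)}"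

lemma sqmono_in_Cmonos_iff:
  "sqmono J j \<in> Cmonos m c \<longleftrightarrow> J \<subseteq> {1..m} \<and> card J = c \<and> j \<le> m \<and> (\<exists>i\<in>J. i \<le> j)"
  unfolding Cmonos_def by (auto simp: sqmono_inject)

theorem admissible_weight_eq_Cmonos:
  "{z. admissible m z \<and> omega m z = weight c} = Cmonos m c"
proof (intro set_eqI iffI)
  fix z assume "z \<in> {z. admissible m z \<and> omega m z = weight c}"
  then have z: "z \<in> Pmonos m" "\<not> inadmissible m z" "omega m z = weight c"
    unfolding admissible_def by auto
  obtain J j where J: "J \<subseteq> {1..m}" "j \<in> {1..m}" "card J = c" "z = sqmono J j"
    using omega_eq_weightE[OF z(1,3)] by blast
  have "\<exists>i\<in>J. i \<le> j"
  proof (rule ccontr)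
    assume "\<not> (\<exists>i\<in>J. i \<le> j)"
    then have "inadmissible m z" unfolding J(4) using J(1,2) by (intro sqmono_inadmissible) auto
    then show False using z(2) by simp
  qed
  then show "z \<in> Cmonos m c" using J by (simp add: sqmono_in_Cmonos_iff)
next
  fix z assume "z \<in> Cmonos m c"
  then obtain J j i where "J \<subseteq> {1..m}" "card J = c" "j \<le> m" "i \<in> J" "i \<le> j" "z = sqmono J j"
    unfolding Cmonos_def by blast
  moreover have "j \<in> {1..m}" using calculation by auto
  ultimately show "z \<in> {z. admissible m z \<and> omega m z = weight c}"
    using sqmono_admissible omega_sqmono by auto
qed

section \<open>The dimension of QP_m((c, 1, 0, ...))\<close>

definition QP_relations :: "nat \<Rightarrow> (nat \<Rightarrow> nat) \<Rightarrow> poly set" where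
  "QP_relations m w = (Aplus m \<inter> Pw m w) \<union> Pw_minus m w"

lemma Pw_finitely_generated:
  obtains G where "finite G" "Pw m w = V.span G"
proof
  let ?G = "mpoly ` {y. y \<in> Pmonos m \<and> mdeg m y = wdeg w \<and> (lexless (omega m y) w \<or> omega m y = w)}"
  show "Pw m w = V.span ?G" unfolding Pw_def by (simp add: setcompr_eq_image)
  show "finite ?G"
    by (rule finite_imageI, rule finite_subset[OF _ finite_Pmonos_mdeg[of m "wdeg w"]]) auto
qed

lemma subspace_Pw: "V.subspace (Pw m w)"
  unfolding Pw_def by (rule V.subspace_span)

lemma mpoly_in_Pw:
  "y \<in> Pmonos m \<Longrightarrow> mdeg m y = wdeg w \<Longrightarrow> lexless (omega m y) w \<or> omega m y = w \<Longrightarrow> mpoly y \<in> Pw m w"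
  unfolding Pw_def by (rule V.span_base) blast

lemma QP_relations_subset_Pw: "QP_relations m w \<subseteq> Pw m w"
proof -
  have "Pw_minus m w \<subseteq> Pw m w" unfolding Pw_minus_def Pw_def by (intro V.span_mono) blast
  then show ?thesis unfolding QP_relations_def by blast
qed

lemma Cmonos_subset: "Cmonos m c \<subseteq> {y \<in> Pmonos m. mdeg m y = c + 2 \<and> omega m y = weight c}"
proof
  fix x assume "x \<in> Cmonos m c"
  then obtain J j i where J: "J \<subseteq> {1..m}" "card J = c" "j \<le> m" "i \<in> J" "i \<le> j" "x = sqmono J j"
    unfolding Cmonos_def by blast
  then have "j \<in> {1..m}" by auto
  with J show "x \<in> {y \<in> Pmonos m. mdeg m y = c + 2 \<and> omega m y = weight c}"
    by (simp add: sqmono_Pmonos mdeg_sqmono omega_sqmono)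
qed

lemma finite_Cmonos: "finite (Cmonos m c)"
  using finite_Pmonos_mdeg[of m "c + 2"] by (rule finite_subset[rotated]) (use Cmonos_subset in blast)

lemma mpoly_Cmonos_subset_Pw: "mpoly ` Cmonos m c \<subseteq> Pw m (weight c)"
proof (rule image_subsetI)
  fix y assume "y \<in> Cmonos m c"
  then have "y \<in> Pmonos m" "mdeg m y = wdeg (weight c)" "omega m y = weight c"
    using Cmonos_subset[of m c] by (auto simp: wdeg_weight)
  then show "mpoly y \<in> Pw m (weight c)" by (intro mpoly_in_Pw) auto
qed

lemma mpoly_weight_in_span:
  assumes y: "y \<in> Pmonos m" "omega m y = weight c"
  shows "mpoly y \<in> V.span (QP_relations m (weight c) \<union> mpoly ` Cmonos m c)"
proof -
  let ?R = "QP_relations m (weight c)" and ?C = "mpoly ` Cmonos m c"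
  obtain J j where J: "J \<subseteq> {1..m}" "j \<in> {1..m}" "card J = c" "y = sqmono J j"
    using omega_eq_weightE[OF y] by blast
  show ?thesis
  proof (cases "\<exists>i\<in>J. i \<le> j")
    case True
    then have "mpoly y \<in> ?C" using J by (simp add: sqmono_in_Cmonos_iff)
    then show ?thesis by (simp add: V.span_base)
  next
    case False
    then have "j \<notin> J" by auto
    define \<Sigma> where "\<Sigma> = (\<Sum>i\<in>J. mpoly (sqmono (insert j J - {i}) i))"
    define sq where "sq = Sq m 1 (sqfree (insert j J))"
    have "finite J" using J(1) finite_subset by blast
    have "mpoly (sqmono (insert j J - {i}) i) \<in> ?C" if "i \<in> J" for i
    proof -
      have "card (insert j J - {i}) = c" using J(3) \<open>finite J\<close> \<open>j \<notin> J\<close> that by simp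
      then have "sqmono (insert j J - {i}) i \<in> Cmonos m c"
        using J(1,2) False that unfolding sqmono_in_Cmonos_iff by (auto intro!: bexI[of _ j])
      then show ?thesis by simp
    qed
    then have "\<Sigma> \<in> V.span ?C" unfolding \<Sigma>_def by (intro V.span_sum V.span_base)
    then have \<Sigma>_Pw: "\<Sigma> \<in> Pw m (weight c)"
      using V.span_minimal[OF mpoly_Cmonos_subset_Pw subspace_Pw] by blast
    have y_Pw: "mpoly y \<in> Pw m (weight c)"
      using y J by (intro mpoly_in_Pw) (auto simp: mdeg_sqmono wdeg_weight)
    have y_eq: "mpoly y = sq + \<Sigma>"
      unfolding J(4) sq_def \<Sigma>_def using J(1,2) \<open>j \<notin> J\<close> by (rule mpoly_sqmono_eq)
    then have "sq = mpoly y - \<Sigma>" by simp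
    then have "sq \<in> Pw m (weight c)" using V.subspace_diff[OF subspace_Pw y_Pw \<Sigma>_Pw] by simp
    moreover have "sq \<in> Aplus m" unfolding sq_def using J(1,2) by (intro Sq_in_Aplus sqfree_Pmonos) auto
    ultimately have "sq \<in> V.span (?R \<union> ?C)" unfolding QP_relations_def by (intro V.span_base) blast
    moreover have "\<Sigma> \<in> V.span (?R \<union> ?C)" using \<open>\<Sigma> \<in> V.span ?C\<close> V.span_mono[of ?C "?R \<union> ?C"] by blast
    ultimately show ?thesis unfolding y_eq by (rule V.span_add)
  qed
qed

lemma Pw_weight_eq_span: "Pw m (weight c) = V.span (QP_relations m (weight c) \<union> mpoly ` Cmonos m c)"
proof
  show "V.span (QP_relations m (weight c) \<union> mpoly ` Cmonos m c) \<subseteq> Pw m (weight c)"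
    using QP_relations_subset_Pw mpoly_Cmonos_subset_Pw unfolding Pw_def
    by (intro V.span_minimal) auto
  have "mpoly y \<in> V.span (QP_relations m (weight c) \<union> mpoly ` Cmonos m c)"
    if "y \<in> Pmonos m" "mdeg m y = wdeg (weight c)" "lexless (omega m y) (weight c) \<or> omega m y = weight c"
    for y
  proof (cases "omega m y = weight c")
    case False
    then have "mpoly y \<in> Pw_minus m (weight c)" unfolding Pw_minus_def using that by (intro V.span_base) auto
    then show ?thesis unfolding QP_relations_def by (intro V.span_base) blast
  qed (use that mpoly_weight_in_span in blast)
  then show "Pw m (weight c) \<subseteq> V.span (QP_relations m (weight c) \<union> mpoly ` Cmonos m c)"
    unfolding Pw_def by (intro V.span_minimal) auto
qed

lemma Cmonos_test_set:
  assumes "x \<in> Cmonos m c"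
  obtains W where "finite W" "x \<in> W" "W \<inter> Cmonos m c = {x}"
    "\<And>f. f \<in> V.span (QP_relations m (weight c)) \<Longrightarrow> (\<Sum>y\<in>W. f y) = 0"
proof -
  obtain J j i where J: "J \<subseteq> {1..m}" "card J = c" "j \<le> m" "i \<in> J" "i \<le> j" "x = sqmono J j"
    using assms unfolding Cmonos_def by blast
  obtain W where W: "finite W" "x \<in> W" "\<And>f. f \<in> Aplus m \<Longrightarrow> (\<Sum>y\<in>W. f y) = 0"
    "\<And>y. y \<in> W - {x} \<Longrightarrow> omega m y = omega m x \<and> (\<exists>J' j'. y = sqmono J' j' \<and> (\<forall>i\<in>J'. j' < i))"
    unfolding J(6) by (rule sqmono_test_set[OF J(1,3-5)]) blast
  have "omega m x = weight c" using assms Cmonos_subset by blast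
  have relations: "(\<Sum>y\<in>W. g y) = 0" if "g \<in> QP_relations m (weight c)" for g
  proof -
    have mpoly_sum: "(\<Sum>y\<in>W. mpoly z y) = 0" if "lexless (omega m z) (weight c)" for z
    proof -
      have "omega m z \<noteq> weight c" using that lexless_irrefl by metis
      then have "z \<notin> W" using W(4)[of z] \<open>omega m x = weight c\<close> by auto
      then show ?thesis using W(1) by (simp add: mpoly_apply)
    qed
    have "(\<Sum>y\<in>W. g y) = 0" if "g \<in> Pw_minus m (weight c)"
      by (rule sum_eq_0_on_span[OF W(1) _ that[unfolded Pw_minus_def]]) (use mpoly_sum in blast)
    then show ?thesis using that W(3) unfolding QP_relations_def by blast
  qed
  have "W \<inter> Cmonos m c = {x}"
  proof -
    have "y \<notin> Cmonos m c" if y: "y \<in> W - {x}" for y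
    proof -
      obtain J' j' where J': "y = sqmono J' j'" "\<forall>i\<in>J'. j' < i" using W(4)[OF y] by blast
      then have "sqmono J' j' \<notin> Cmonos m c" unfolding sqmono_in_Cmonos_iff using leD by blast
      then show ?thesis using J'(1) by simp
    qed
    then show ?thesis using W(2) assms by blast
  qed
  moreover have "(\<Sum>y\<in>W. f y) = 0" if "f \<in> V.span (QP_relations m (weight c))" for f
    by (rule sum_eq_0_on_span[OF W(1) _ that]) (rule relations)
  ultimately show ?thesis by (rule that[OF W(1,2)])
qed

lemma span_QP_relations_inter_Cmonos:
  "V.span (QP_relations m (weight c)) \<inter> V.span (mpoly ` Cmonos m c) \<subseteq> {0}"
proof
  fix f assume f: "f \<in> V.span (QP_relations m (weight c)) \<inter> V.span (mpoly ` Cmonos m c)"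
  have "f x = 0" for x
  proof (cases "x \<in> Cmonos m c")
    case True
    then obtain W where W: "finite W" "x \<in> W" "W \<inter> Cmonos m c = {x}"
      "\<And>g. g \<in> V.span (QP_relations m (weight c)) \<Longrightarrow> (\<Sum>y\<in>W. g y) = 0"
      by (rule Cmonos_test_set) blast
    have "f y = 0" if "y \<in> W - {x}" for y
      using f W(3) that by (intro span_mpoly_apply_notin[of f "Cmonos m c"]) auto
    then have "(\<Sum>y\<in>W. f y) = f x" using W(1,2) by (simp add: sum.remove)
    then show ?thesis using W(4) f by simp
  next
    case False
    then show ?thesis using span_mpoly_apply_notin[of f "Cmonos m c" x] f by blast
  qed
  then show "f \<in> {0}" by auto
qed

theorem dimQP_weight: "dimQP m (weight c) = card (Cmonos m c)"
proof -
  obtain G where G: "finite G" "Pw m (weight c) = V.span G" by (rule Pw_finitely_generated)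
  have "card (mpoly ` Cmonos m c) = card (Cmonos m c)" by (simp add: card_image inj_on_def)
  moreover have "V.dim (Pw m (weight c)) =
      V.dim (V.span (QP_relations m (weight c))) + card (mpoly ` Cmonos m c)"
    unfolding Pw_weight_eq_span
    using G QP_relations_subset_Pw independent_mpoly finite_Cmonos span_QP_relations_inter_Cmonos
    by (intro V.dim_span_Un_eq_add_card) auto
  ultimately show ?thesis unfolding dimQP_def QP_relations_def by simp
qed

section \<open>Counting\<close>

lemma bij_betw_insert_below:
  fixes A :: "'a::linorder set"
  assumes "finite A"
  shows "bij_betw (\<lambda>(J, j). insert j J)
    {(J, j). J \<subseteq> A \<and> card J = c \<and> j \<in> A \<and> (\<forall>i\<in>J. j < i)} {K. K \<subseteq> A \<and> card K = Suc c}"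
    (is "bij_betw _ ?B ?K")
proof (rule bij_betw_byWitness[where f' = "\<lambda>K. (K - {Min K}, Min K)"])
  have B: "finite J" "j \<notin> J" "Min (insert j J) = j" if "(J, j) \<in> ?B" for J j
  proof -
    have J: "J \<subseteq> A" "\<forall>i\<in>J. j < i" using that by auto
    then show "finite J" using assms finite_subset by blast
    show "j \<notin> J" using J(2) by blast
    show "Min (insert j J) = j" using J(2) \<open>finite J\<close> by (intro Min_eqI) (auto simp: less_imp_le)
  qed
  show "\<forall>a\<in>?B. (\<lambda>K. (K - {Min K}, Min K)) ((\<lambda>(J, j). insert j J) a) = a"
  proof
    fix a assume "a \<in> ?B"
    obtain J j where a: "a = (J, j)" by (cases a)
    have Jj: "(J, j) \<in> ?B" using \<open>a \<in> ?B\<close> unfolding a .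
    show "(\<lambda>K. (K - {Min K}, Min K)) ((\<lambda>(J, j). insert j J) a) = a"
      using B[OF Jj] unfolding a by (simp add: Diff_insert_absorb)
  qed
  show "(\<lambda>(J, j). insert j J) ` ?B \<subseteq> ?K"
  proof (rule image_subsetI)
    fix a assume "a \<in> ?B"
    obtain J j where a: "a = (J, j)" by (cases a)
    have Jj: "(J, j) \<in> ?B" using \<open>a \<in> ?B\<close> unfolding a .
    then have "J \<subseteq> A" "card J = c" "j \<in> A" by auto
    then show "(\<lambda>(J, j). insert j J) a \<in> ?K"
      using B[OF Jj] unfolding a by simp
  qed
  have K: "finite K" "Min K \<in> K" "\<And>i. i \<in> K \<Longrightarrow> Min K \<le> i" if "K \<in> ?K" for K
  proof -
    have "K \<subseteq> A" "card K = Suc c" using that by auto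
    then show "finite K" using assms finite_subset by blast
    moreover have "K \<noteq> {}" using \<open>card K = Suc c\<close> by auto
    ultimately show "Min K \<in> K" "\<And>i. i \<in> K \<Longrightarrow> Min K \<le> i" by simp_all
  qed
  show "\<forall>K\<in>?K. (\<lambda>(J, j). insert j J) (K - {Min K}, Min K) = K"
    using K by (auto simp: insert_absorb)
  show "(\<lambda>K. (K - {Min K}, Min K)) ` ?K \<subseteq> ?B"
  proof (rule image_subsetI)
    fix K assume "K \<in> ?K"
    note K = K[OF this]
    have "card (K - {Min K}) = c" using \<open>K \<in> ?K\<close> K(1,2) by simp
    moreover have "Min K < i" if "i \<in> K - {Min K}" for i using K(3)[of i] that by auto
    ultimately show "(K - {Min K}, Min K) \<in> ?B" using \<open>K \<in> ?K\<close> K(2) by auto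
  qed
qed

lemma card_pairs_below:
  "card {(J, j). J \<subseteq> {1..m} \<and> card J = c \<and> j \<in> {1..m} \<and> (\<forall>i\<in>J. j < i)} = m choose Suc c"
proof -
  have "card {(J, j). J \<subseteq> {1..m} \<and> card J = c \<and> j \<in> {1..m} \<and> (\<forall>i\<in>J. j < i)} =
      card {K. K \<subseteq> {1..m} \<and> card K = Suc c}"
    by (rule bij_betw_same_card[OF bij_betw_insert_below]) simp
  also have "\<dots> = m choose Suc c" using n_subsets[of "{1..m}" "Suc c"] by simp
  finally show ?thesis .
qed

theorem card_Cmonos: "card (Cmonos m c) = m * (m choose c) - (m choose Suc c)"
proof -
  let ?P = "{J. J \<subseteq> {1..m} \<and> card J = c} \<times> {1..m}"
  let ?B = "{(J, j). J \<subseteq> {1..m} \<and> card J = c \<and> j \<in> {1..m} \<and> (\<forall>i\<in>J. j < i)}"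
  have "Cmonos m c = (\<lambda>(J, j). sqmono J j) ` (?P - ?B)"
  proof (intro set_eqI iffI)
    fix x assume "x \<in> Cmonos m c"
    then obtain J j i where J: "J \<subseteq> {1..m}" "card J = c" "j \<le> m" "i \<in> J" "i \<le> j" "x = sqmono J j"
      unfolding Cmonos_def by blast
    then have "j \<in> {1..m}" by auto
    moreover have "\<not> (\<forall>i\<in>J. j < i)" using J(4,5) leD by blast
    ultimately have "(J, j) \<in> ?P - ?B" using J(1-3) by simp
    then show "x \<in> (\<lambda>(J, j). sqmono J j) ` (?P - ?B)"
      by (rule image_eqI[where x = "(J, j)", rotated]) (simp add: J(6))
  next
    fix x assume "x \<in> (\<lambda>(J, j). sqmono J j) ` (?P - ?B)"
    then obtain p where p: "p \<in> ?P - ?B" "x = (\<lambda>(J, j). sqmono J j) p" by blast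
    obtain J j where "p = (J, j)" by (cases p)
    with p have J: "(J, j) \<in> ?P - ?B" "x = sqmono J j" by simp_all
    then have "J \<subseteq> {1..m}" "card J = c" "j \<le> m" "\<not> (\<forall>i\<in>J. j < i)" by auto
    then have "J \<subseteq> {1..m}" "card J = c" "j \<le> m" "\<exists>i\<in>J. i \<le> j" using not_less by blast+
    then show "x \<in> Cmonos m c" unfolding Cmonos_def using J(2) by blast
  qed
  moreover have "inj_on (\<lambda>(J, j). sqmono J j) (?P - ?B)"
    by (rule inj_onI) (clarsimp simp: sqmono_inject)
  ultimately have "card (Cmonos m c) = card (?P - ?B)" by (simp add: card_image)
  also have "\<dots> = card ?P - card ?B"
  proof (rule card_Diff_subset)
    show "?B \<subseteq> ?P" by auto
    moreover have "finite ?P" by (rule finite_cartesian_product[OF finite_subset[of _ "Pow {1..m}"]]) auto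
    ultimately show "finite ?B" by (rule finite_subset)
  qed
  also have "card ?P = m * (m choose c)" by (simp add: card_cartesian_product n_subsets)
  also have "card ?B = m choose Suc c" by (rule card_pairs_below)
  finally show ?thesis .
qed

lemma Cset_eq_Cmonos:
  assumes "4 \<le> k"
  shows "Cset k = Cmonos (k - 1) (k - 3)"
proof -
  have Min_le: "Min J \<le> j \<longleftrightarrow> (\<exists>i\<in>J. i \<le> j)" if "card J = k - 3" for J and j :: nat
  proof -
    have "0 < card J" using that assms by simp
    then have "finite J" "J \<noteq> {}" using card_gt_0_iff by blast+
    then show ?thesis by (rule Min_le_iff)
  qed
  have "J \<subseteq> {1..<k} \<and> card J = k - 3 \<and> Min J \<le> j \<and> j < k \<longleftrightarrow>
      J \<subseteq> {1..k - 1} \<and> card J = k - 3 \<and> j \<le> k - 1 \<and> (\<exists>i\<in>J. i \<le> j)" for J j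
  proof (cases "card J = k - 3")
    case True
    moreover have "{1..<k} = {1..k - 1}" "j < k \<longleftrightarrow> j \<le> k - 1" using assms by auto
    ultimately show ?thesis using Min_le[OF True, of j] by (simp add: conj_ac)
  qed simp
  moreover have "Cset k = {sqmono J j | J j. J \<subseteq> {1..<k} \<and> card J = k - 3 \<and> Min J \<le> j \<and> j < k}"
    unfolding Cset_def sqmono_def by blast
  ultimately show ?thesis unfolding Cmonos_def by simp
qed

lemma card_Cset_arith:
  assumes "4 \<le> k"
  shows "(k - 1) * ((k - 1) choose (k - 3)) - ((k - 1) choose Suc (k - 3)) = (k - 3) * (k choose 2)"
proof -
  obtain n where k: "k = n + 4" using assms by (metis add.commute le_add_diff_inverse)
  define a where "a = n + 3 choose 2"
  have k_minus: "k - 1 = n + 3" "k - 3 = n + 1" using k by simp_all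
  have choose_n3: "n + 3 choose (n + 1) = a" "n + 3 choose Suc (n + 1) = n + 3"
    unfolding a_def using binomial_symmetric[of 2 "n + 3"] binomial_symmetric[of 1 "n + 3"] by simp_all
  have choose_k: "k choose 2 = (n + 3) + a"
    unfolding k a_def using binomial_Suc_Suc[of "n + 3" 1] by (simp add: numeral_eq_Suc)
  have key: "(n + 3) * a = (n + 1) * ((n + 3) + a) + (n + 3)"
  proof -
    have "even ((n + 3) * (n + 2))" by simp
    then have "2 * a = (n + 3) * (n + 2)" unfolding a_def choose_two by simp
    then show ?thesis by (simp add: algebra_simps)
  qed
  show ?thesis
    unfolding k_minus choose_n3 choose_k key by simp
qed

theorem lemma3p8:
  fixes k :: nat
  assumes "4 \<le> k"
  shows "Cset k = {z. admissible (k - 1) z \<and>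
                        omega (k - 1) z = (\<lambda>t. if t = 0 then k - 3 else if t = 1 then 1 else 0)}
         \<and> dimQP (k - 1) (\<lambda>t. if t = 0 then k - 3 else if t = 1 then 1 else 0)
             = (k - 3) * (k choose 2)"
proof -
  have weight: "(\<lambda>t. if t = 0 then k - 3 else if t = 1 then 1 else 0) = weight (k - 3)"
    by (simp add: weight_def)
  have "Cset k = {z. admissible (k - 1) z \<and> omega (k - 1) z = weight (k - 3)}"
    unfolding Cset_eq_Cmonos[OF assms] admissible_weight_eq_Cmonos ..
  moreover have "dimQP (k - 1) (weight (k - 3)) = (k - 3) * (k choose 2)"
    unfolding dimQP_weight card_Cmonos by (rule card_Cset_arith[OF assms])
  ultimately show ?thesis unfolding weight ..
qed

end
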